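(* Every tOR net is sub-sound.
   Context: Petri nets and markings. A Petri net is a triple $(P,T,F)$ with $P$ a finite set of places, $T$ a finite set of transitions, $P\cap T=\emptyset$, and $F\subseteq (P\times T)\cup(T\times P)$. For a node $x$, $\bullet x=\{y\mid (y,x)\in F\}$, $x\bullet=\{y\mid (x,y)\in F\}$. A marking is a multiset over $P$ (a function $P\to\mathbb N$); sets of places are identified with bags of multiplicity one, $+,-,\le$ are pointwise, and $k.m$ is the sum of $k$ copies of $m$. Transition $t$ is enabled at $m$ iff $\bullet t\le m$, firing gives $m-\bullet t+t\bullet$, and $m\xrightarrow{*}m'$ denotes reachability by a finite (possibly empty) firing sequence. Workflow nets. A pWF net is $(P,T,F,I,O)$ with $(P,T,F)$ a Petri net, $I,O\subseteq P$ non-empty, every node reachable by a directed path from some node of $I$, and some node of $O$ reachable from every node. A tWF net is the same with $I,O$ non-empty subsets of $T$. Input nodes may have incoming edges and output nodes outgoing edges. The place-completion $\mathrm{pc}(N)$ of a tWF net $N=(P,T,F,I,O)$ is obtained by adding two fresh places $p_i,p_o$ with edges $(p_i,t)$ for all $t\in I$ and $(t,p_o)$ for all $t\in O$, and taking input set $\{p_i\}$ and output set $\{p_o\}$. OR nets. An OR net is a (possibly cyclic) WF net such that for every transition $t$: (1) either $t\in I$ and $|\bullet t|=0$, or $t\notin I$ and $|\bullet t|=1$; and (2) either $t\in O$ and $|t\bullet|=0$, or $t\notin O$ and $|t\bullet|=1$. A tOR net is an OR net that is a tWF net. Sub-soundness. A pWF net is sub-sound if for all integers $k\ge k'\ge 0$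 and every marking $m'$: if $k.I\xrightarrow{*}m'+k'.O$ then $m'\xrightarrow{*}(k-k').O$. A tWF net is sub-sound iff its place-completion is. *)

theory Defs
  imports Main "HOL-Library.Multiset"
begin

text \<open>A Petri net (P,T,F) with places of type 'p and transitions of type 't.
  Since the node types are separate, P and T are disjoint; F is split into
  the place-to-transition part (pre) and the transition-to-place part (post),
  so F is a subset of (P x T) u (T x P) by construction.\<close>

record ('p, 't) pnet =
  places :: "'p set"
  trans  :: "'t set"
  pre    :: "('p \<times> 't) set"
  post   :: "('t \<times> 'p) set"

definition petri_net :: "('p, 't) pnet \<Rightarrow> bool" where
  "petri_net N \<longleftrightarrow> finite (places N) \<and> finite (trans N) \<and>
     pre N \<subseteq> places N \<times> trans N \<and> post N \<subseteq> trans N \<times> places N"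

definition preset :: "('p, 't) pnet \<Rightarrow> 't \<Rightarrow> 'p set" where
  "preset N t = {p. (p, t) \<in> pre N}"

definition postset :: "('p, 't) pnet \<Rightarrow> 't \<Rightarrow> 'p set" where
  "postset N t = {p. (t, p) \<in> post N}"

definition fire :: "('p, 't) pnet \<Rightarrow> 'p multiset \<Rightarrow> 't \<Rightarrow> 'p multiset \<Rightarrow> bool" where
  "fire N m t m' \<longleftrightarrow> t \<in> trans N \<and> mset_set (preset N t) \<subseteq># m \<and>
     m' = m - mset_set (preset N t) + mset_set (postset N t)"

definition reach :: "('p, 't) pnet \<Rightarrow> 'p multiset \<Rightarrow> 'p multiset \<Rightarrow> bool" where
  "reach N = (\<lambda>m m'. \<exists>t. fire N m t m')\<^sup>*\<^sup>*"

definition nodes :: "('p, 't) pnet \<Rightarrow> ('p + 't) set" where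
  "nodes N = Inl ` places N \<union> Inr ` trans N"

definition flow :: "('p, 't) pnet \<Rightarrow> (('p + 't) \<times> ('p + 't)) set" where
  "flow N = {(Inl p, Inr t) | p t. (p, t) \<in> pre N} \<union> {(Inr t, Inl p) | t p. (t, p) \<in> post N}"

definition wf_connected :: "('p, 't) pnet \<Rightarrow> ('p + 't) set \<Rightarrow> ('p + 't) set \<Rightarrow> bool" where
  "wf_connected N Is Os \<longleftrightarrow>
     (\<forall>x \<in> nodes N. (\<exists>i \<in> Is. (i, x) \<in> (flow N)\<^sup>*) \<and> (\<exists>q \<in> Os. (x, q) \<in> (flow N)\<^sup>*))"

definition pWF :: "('p, 't) pnet \<Rightarrow> 'p set \<Rightarrow> 'p set \<Rightarrow> bool" where
  "pWF N Inp Out \<longleftrightarrow> petri_net N \<and> Inp \<subseteq> places N \<and> Out \<subseteq> places N \<and> Inp \<noteq> {} \<and> Out \<noteq> {} \<and>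
     wf_connected N (Inl ` Inp) (Inl ` Out)"

definition tWF :: "('p, 't) pnet \<Rightarrow> 't set \<Rightarrow> 't set \<Rightarrow> bool" where
  "tWF N Inp Out \<longleftrightarrow> petri_net N \<and> Inp \<subseteq> trans N \<and> Out \<subseteq> trans N \<and> Inp \<noteq> {} \<and> Out \<noteq> {} \<and>
     wf_connected N (Inr ` Inp) (Inr ` Out)"

definition tOR :: "('p, 't) pnet \<Rightarrow> 't set \<Rightarrow> 't set \<Rightarrow> bool" where
  "tOR N Inp Out \<longleftrightarrow> tWF N Inp Out \<and>
     (\<forall>t \<in> trans N.
        ((t \<in> Inp \<and> card (preset N t) = 0) \<or> (t \<notin> Inp \<and> card (preset N t) = 1)) \<and>
        ((t \<in> Out \<and> card (postset N t) = 0) \<or> (t \<notin> Out \<and> card (postset N t) = 1)))"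

definition sub_sound_p :: "('p, 't) pnet \<Rightarrow> 'p set \<Rightarrow> 'p set \<Rightarrow> bool" where
  "sub_sound_p N Inp Out \<longleftrightarrow>
     (\<forall>k k' m'. k' \<le> k \<longrightarrow> set_mset m' \<subseteq> places N \<longrightarrow>
        reach N (repeat_mset k (mset_set Inp)) (m' + repeat_mset k' (mset_set Out)) \<longrightarrow>
        reach N m' (repeat_mset (k - k') (mset_set Out)))"

datatype 'p cplace = Orig 'p | PIn | POut

definition pc :: "('p, 't) pnet \<Rightarrow> 't set \<Rightarrow> 't set \<Rightarrow> ('p cplace, 't) pnet" where
  "pc N Inp Out = \<lparr> places = Orig ` places N \<union> {PIn, POut},
               trans = trans N,
               pre = {(Orig p, t) | p t. (p, t) \<in> pre N} \<union> {(PIn, t) | t. t \<in> Inp},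
               post = {(t, Orig p) | t p. (t, p) \<in> post N} \<union> {(t, POut) | t. t \<in> Out} \<rparr>"

definition sub_sound_t :: "('p, 't) pnet \<Rightarrow> 't set \<Rightarrow> 't set \<Rightarrow> bool" where
  "sub_sound_t N Inp Out \<longleftrightarrow> sub_sound_p (pc N Inp Out) {PIn} {POut}"

end

theory Submission
  imports Defs
begin

(* In the place completion pc(N) of a tOR net every transition has
   exactly one input place and exactly one output place (the fresh places PIn and
   POut take over the role of the missing ones at input/output transitions).
   Such a "unary" net behaves like a collection of independent tokens:
   (1) firing moves one token, so the number of tokens is invariant, and
   (2) reachability is monotone under adding tokens, so markings can be moved to
       the target one token at a time.
   Because every node of N lies on a path to an output transition, a single token
   on any place of pc(N) can be moved to POut along that path.
   Hence k.PIn -->* m' + k'.POut forces |m'| = k - k', and m' can be emptied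
   into (k - k').POut, which is sub-soundness. *)

lemma reach_refl: "reach M m m"
  unfolding reach_def by simp

lemma reach_trans: "reach M a b \<Longrightarrow> reach M b c \<Longrightarrow> reach M a c"
  unfolding reach_def by (rule rtranclp_trans)

lemma fire_reach: "fire M a t b \<Longrightarrow> reach M b c \<Longrightarrow> reach M a c"
  unfolding reach_def by (rule converse_rtranclp_into_rtranclp) blast+

lemma fire_add:
  assumes "fire M m t m'"
  shows "fire M (m + c) t (m' + c)"
proof -
  let ?A = "mset_set (preset M t)" and ?B = "mset_set (postset M t)"
  have sub: "?A \<subseteq># m" and m': "m' = m - ?A + ?B" and t: "t \<in> trans M"
    using assms by (auto simp: fire_def)
  have "?A \<subseteq># m + c"
    using sub by (metis mset_subset_eq_add_left subset_mset.order_trans)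
  moreover have "m + c - ?A + ?B = m' + c"
    using m' multiset_diff_union_assoc[OF sub, of c] by (simp add: ac_simps)
  ultimately show ?thesis using t by (simp add: fire_def)
qed

lemma reach_add: "reach M m m' \<Longrightarrow> reach M (m + c) (m' + c)"
  unfolding reach_def
proof (induction rule: rtranclp_induct)
  case base
  then show ?case by simp
next
  case (step y z)
  then obtain t where "fire M y t z" by blast
  then have "fire M (y + c) t (z + c)" by (rule fire_add)
  then have "(\<lambda>m m'. \<exists>t. fire M m t m') (y + c) (z + c)" by blast
  with step.IH show ?case by (rule rtranclp.rtrancl_into_rtrancl)
qed

lemma reach_tokenwise:
  assumes "\<And>x. x \<in># m \<Longrightarrow> reach M {#x#} {#z#}"
  shows "reach M m (repeat_mset (size m) {#z#})"
  using assms
proof (induction m)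
  case empty
  then show ?case by (simp add: reach_refl)
next
  case (add x m)
  have "reach M (add_mset x m) (repeat_mset (size m) {#z#} + {#x#})"
    using reach_add[OF add.IH, of "{#x#}"] add.prems by simp
  moreover have "reach M (repeat_mset (size m) {#z#} + {#x#}) (repeat_mset (size m) {#z#} + {#z#})"
    using reach_add[OF add.prems, of x "repeat_mset (size m) {#z#}"] by (simp add: add.commute)
  ultimately have "reach M (add_mset x m) (repeat_mset (size m) {#z#} + {#z#})"
    by (rule reach_trans)
  then show ?case by (simp add: add.commute)
qed

definition unary_net :: "('p, 't) pnet \<Rightarrow> bool" where
  "unary_net M \<longleftrightarrow> (\<forall>t \<in> trans M. \<exists>a b. preset M t = {a} \<and> postset M t = {b})"

lemma unary_netE:
  assumes "unary_net M" "t \<in> trans M"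
  obtains a b where "preset M t = {a}" "postset M t = {b}"
  using assms unfolding unary_net_def by blast

lemma fire_single_token:
  assumes "t \<in> trans M" "preset M t = {a}" "postset M t = {b}"
  shows "fire M {#a#} t {#b#}"
  using assms by (simp add: fire_def)

lemma unary_fire_size:
  assumes "unary_net M" "fire M m t m'"
  shows "size m' = size m"
proof -
  have "t \<in> trans M" using assms(2) by (simp add: fire_def)
  then obtain a b where "preset M t = {a}" "postset M t = {b}"
    by (rule unary_netE[OF assms(1)])
  then have sub: "{#a#} \<subseteq># m" and m': "m' = m - {#a#} + {#b#}"
    using assms(2) by (auto simp: fire_def)
  show ?thesis using m' size_Diff_submset[OF sub] size_mset_mono[OF sub] by simp
qed

lemma unary_reach_size:
  assumes "unary_net M" "reach M m m'"
  shows "size m' = size m"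
  using assms(2) unfolding reach_def
  by (induction rule: rtranclp_induct) (auto dest: unary_fire_size[OF assms(1)])

lemma pc_trans [simp]: "trans (pc N Inp Out) = trans N"
  by (simp add: pc_def)

lemma pc_places: "places (pc N Inp Out) = Orig ` places N \<union> {PIn, POut}"
  by (simp add: pc_def)

lemma pc_preset:
  "preset (pc N Inp Out) t = Orig ` preset N t \<union> (if t \<in> Inp then {PIn} else {})"
  by (auto simp: preset_def pc_def)

lemma pc_postset:
  "postset (pc N Inp Out) t = Orig ` postset N t \<union> (if t \<in> Out then {POut} else {})"
  by (auto simp: postset_def pc_def)

text \<open>The OR condition says that a set S of places (the pre- or post-set of t in N)
  has at most one element, and none exactly when the fresh place F is attached;
  after completion the set is therefore a singleton.\<close>

lemma completed_singleton:
  assumes "finite S" "(c \<and> card S = 0) \<or> (\<not> c \<and> card S = 1)"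
  shows "\<exists>a. Orig ` S \<union> (if c then {F} else {}) = {a}"
  using assms by (cases c) (auto simp: card_1_singleton_iff)

lemma tOR_pc_unary:
  assumes "tOR N Inp Out"
  shows "unary_net (pc N Inp Out)"
  unfolding unary_net_def
proof
  fix t assume "t \<in> trans (pc N Inp Out)"
  then have t: "t \<in> trans N" by simp
  have pn: "petri_net N" using assms by (simp add: tOR_def tWF_def)
  have "finite (preset N t)" "finite (postset N t)"
    using pn unfolding petri_net_def preset_def postset_def
    by (auto intro: finite_subset[of _ "places N"])
  moreover have "(t \<in> Inp \<and> card (preset N t) = 0) \<or> (t \<notin> Inp \<and> card (preset N t) = 1)"
    and "(t \<in> Out \<and> card (postset N t) = 0) \<or> (t \<notin> Out \<and> card (postset N t) = 1)"
    using assms t by (simp_all add: tOR_def)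
  ultimately show "\<exists>a b. preset (pc N Inp Out) t = {a} \<and> postset (pc N Inp Out) t = {b}"
    unfolding pc_preset pc_postset by (metis completed_singleton)
qed

text \<open>Walking backwards along a flow path that ends in an output transition q:
  a token on place p of the path, or on the output place of a transition t of the
  path, can be moved to POut.\<close>

lemma flow_path_reach_POut:
  assumes or: "tOR N Inp Out" and path: "(x, Inr q) \<in> (flow N)\<^sup>*" and q: "q \<in> Out"
  shows "case x of
           Inl p \<Rightarrow> reach (pc N Inp Out) {#Orig p#} {#POut#}
         | Inr t \<Rightarrow> (\<forall>b \<in> postset (pc N Inp Out) t. reach (pc N Inp Out) {#b#} {#POut#})"
  using path
proof (induction rule: converse_rtrancl_induct)
  case base
  have "q \<in> trans N" using or q by (auto simp: tOR_def tWF_def)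
  then obtain b where "postset (pc N Inp Out) q = {b}"
    using tOR_pc_unary[OF or] by (auto elim: unary_netE)
  moreover have "POut \<in> postset (pc N Inp Out) q" using q by (simp add: pc_postset)
  ultimately show ?case by (simp add: reach_refl)
next
  case (step x y)
  have unary: "unary_net (pc N Inp Out)" using tOR_pc_unary[OF or] .
  have pn: "petri_net N" using or by (simp add: tOR_def tWF_def)
  from step.hyps(1) consider
      (consume) p t where "x = Inl p" "y = Inr t" "(p, t) \<in> pre N"
    | (produce) t p where "x = Inr t" "y = Inl p" "(t, p) \<in> post N"
    unfolding flow_def by blast
  then show ?case
  proof cases
    case consume
    then have t: "t \<in> trans N" using pn by (auto simp: petri_net_def)
    then obtain a b where a: "preset (pc N Inp Out) t = {a}" and b: "postset (pc N Inp Out) t = {b}"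
      using unary by (auto elim: unary_netE)
    have "p \<in> preset N t" using consume by (simp add: preset_def)
    then have "Orig p \<in> preset (pc N Inp Out) t" by (simp add: pc_preset)
    then have "a = Orig p" using a by simp
    then have "fire (pc N Inp Out) {#Orig p#} t {#b#}"
      using fire_single_token[of t "pc N Inp Out"] t a b by simp
    moreover have "reach (pc N Inp Out) {#b#} {#POut#}" using step.IH consume b by simp
    ultimately show ?thesis using consume by (simp add: fire_reach)
  next
    case produce
    then have t: "t \<in> trans N" using pn by (auto simp: petri_net_def)
    then obtain a b where b: "postset (pc N Inp Out) t = {b}"
      using unary by (auto elim: unary_netE)
    have "p \<in> postset N t" using produce by (simp add: postset_def)
    then have "Orig p \<in> postset (pc N Inp Out) t" by (simp add: pc_postset)
    then have "b = Orig p" using b by simp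
    then show ?thesis using step.IH produce b by simp
  qed
qed

text \<open>Every single token of pc(N) can be moved to POut: original places and
  output places of transitions lie on paths to output transitions, and a token on
  PIn first passes through some input transition.\<close>

lemma token_reach_POut:
  assumes or: "tOR N Inp Out" and x: "x \<in> places (pc N Inp Out)"
  shows "reach (pc N Inp Out) {#x#} {#POut#}"
proof -
  have tw: "tWF N Inp Out" using or by (simp add: tOR_def)
  have unary: "unary_net (pc N Inp Out)" using tOR_pc_unary[OF or] .
  have to_out: "\<exists>q \<in> Out. (n, Inr q) \<in> (flow N)\<^sup>*" if "n \<in> nodes N" for n
    using tw that unfolding tWF_def wf_connected_def by blast
  show ?thesis
  proof (cases x)
    case (Orig p)
    then have "Inl p \<in> nodes N" using x by (auto simp: pc_places nodes_def)
    then obtain q where "q \<in> Out" "(Inl p, Inr q) \<in> (flow N)\<^sup>*" using to_out by blast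
    from flow_path_reach_POut[OF or this(2,1)] show ?thesis using Orig by simp
  next
    case PIn
    obtain t where tI: "t \<in> Inp" using tw by (auto simp: tWF_def)
    then have t: "t \<in> trans N" using tw by (auto simp: tWF_def)
    then obtain a b where a: "preset (pc N Inp Out) t = {a}" and b: "postset (pc N Inp Out) t = {b}"
      using unary by (auto elim: unary_netE)
    have "a = PIn" using a tI by (simp add: pc_preset)
    then have "fire (pc N Inp Out) {#PIn#} t {#b#}"
      using fire_single_token[of t "pc N Inp Out"] t a b by simp
    moreover obtain q where "q \<in> Out" "(Inr t, Inr q) \<in> (flow N)\<^sup>*"
      using to_out t by (auto simp: nodes_def)
    from flow_path_reach_POut[OF or this(2,1)]
    have "reach (pc N Inp Out) {#b#} {#POut#}" using b by simp
    ultimately show ?thesis using PIn by (simp add: fire_reach)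
  next
    case POut
    then show ?thesis by (simp add: reach_refl)
  qed
qed

theorem mainTheorem17:
  fixes N :: "('p, 't) pnet" and Inp Out :: "'t set"
  assumes "tOR N Inp Out"
  shows "sub_sound_t N Inp Out"
  unfolding sub_sound_t_def sub_sound_p_def
proof (intro allI impI)
  fix k k' :: nat and m' :: "'p cplace multiset"
  assume "k' \<le> k" and places: "set_mset m' \<subseteq> places (pc N Inp Out)"
    and run: "reach (pc N Inp Out) (repeat_mset k (mset_set {PIn}))
                (m' + repeat_mset k' (mset_set {POut}))"
  have "size m' = k - k'"
    using unary_reach_size[OF tOR_pc_unary[OF assms] run] by simp
  moreover have "reach (pc N Inp Out) m' (repeat_mset (size m') {#POut#})"
    using places by (intro reach_tokenwise token_reach_POut[OF assms]) auto
  ultimately show "reach (pc N Inp Out) m' (repeat_mset (k - k') (mset_set {POut}))"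
    by simp
qed

end
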